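(* Let $\mathbb F$ be a field, $\mathcal A$ a commutative $\mathbb F$-algebra, $\Theta,\Sigma$ square matrices of order $m$ with entries in $\mathcal A$, and $\Xi=\mathrm{diag}(a_1,\dots,a_m)$ with $a_1,\dots,a_m\in\mathbb F$ pairwise distinct. Suppose $\Theta\Sigma=\Sigma\Xi$ and that every column of $\Sigma$ contains at least one entry which is a unit of $\mathcal A$. Then $\det\Sigma$ is a unit in $\mathcal A$. *)

theory Defs
  imports "HOL-Analysis.Analysis"
begin

text \<open>A commutative (unital) F-algebra A is given by its structure map
  phi : F -> A, a unital ring homomorphism.\<close>
definition algebra_map :: "('f::field \<Rightarrow> 'a::comm_ring_1) \<Rightarrow> bool" where
  "algebra_map phi \<longleftrightarrow> phi 1 = 1 \<and> (\<forall>x y. phi (x + y) = phi x + phi y)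
      \<and> (\<forall>x y. phi (x * y) = phi x * phi y)"

definition diag_alg :: "('f \<Rightarrow> 'a::comm_ring_1) \<Rightarrow> ('n::finite \<Rightarrow> 'f) \<Rightarrow> 'a^'n^'n" where
  "diag_alg phi a = (\<chi> i j. if i = j then phi (a i) else 0)"

end

theory Submission
  imports Defs
begin

text \<open>The columns s_l of Sigma are eigenvectors of Theta for the pairwise distinct
  eigenvalues a_l. Hence the Lagrange matrix prod_{k \<noteq> j} (Theta - a_k) / (a_j - a_k) fixes s_j
  and annihilates every s_l with l \<noteq> j. If Sigma_{r j} is a unit, row r of that matrix divided
  by Sigma_{r j} is a row vector b_j with b_j s_l = delta_{j l}, and the rows b_j form a left
  inverse of Sigma.\<close>

lemma algebra_map_0: "algebra_map phi \<Longrightarrow> phi 0 = 0"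
  unfolding algebra_map_def by (metis add_cancel_right_right)

lemma algebra_map_diff: "algebra_map phi \<Longrightarrow> phi (x - y) = phi x - phi y"
  unfolding algebra_map_def by (metis eq_diff_eq)

lemma algebra_map_mult: "algebra_map phi \<Longrightarrow> phi (x * y) = phi x * phi y"
  unfolding algebra_map_def by blast

lemma algebra_map_prod_list:
  "algebra_map phi \<Longrightarrow> phi (prod_list xs) = (\<Prod>x\<leftarrow>xs. phi x)"
  by (induction xs) (auto simp: algebra_map_def)

lemma algebra_map_inverse:
  "algebra_map phi \<Longrightarrow> x \<noteq> 0 \<Longrightarrow> phi (inverse x) * phi x = 1"
  by (metis algebra_map_def algebra_map_mult field_class.field_inverse)

lemma matrix_vector_mult_scalar:
  "(A::'a::comm_semiring_1^'n^'m) *v (c *s x) = c *s (A *v x)"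
  by (simp add: matrix_vector_mult_def vec_eq_iff sum_distrib_left mult_ac)

lemma mat_matrix_vector_mult: "mat (c::'a::semiring_1) *v x = c *s x"
  by (simp add: matrix_vector_mult_def mat_def vec_eq_iff if_distrib if_distribR
      cong del: if_weak_cong)

definition shifted_prod :: "'a::comm_ring_1^'n::finite^'n \<Rightarrow> 'a list \<Rightarrow> 'a^'n^'n" where
  "shifted_prod A ys = foldr (\<lambda>y M. (A - mat y) ** M) ys (mat 1)"

lemma shifted_prod_eigenvector:
  assumes "A *v x = c *s x"
  shows "shifted_prod A ys *v x = (\<Prod>y\<leftarrow>ys. c - y) *s x"
proof (induction ys)
  case Nil
  then show ?case by (simp add: shifted_prod_def)
next
  case (Cons y ys)
  have "shifted_prod A (y # ys) *v x = (A - mat y) *v (shifted_prod A ys *v x)"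
    by (simp add: shifted_prod_def matrix_vector_mul_assoc)
  also have "\<dots> = (\<Prod>y\<leftarrow>ys. c - y) *s (c *s x - y *s x)"
    by (simp add: Cons assms matrix_vector_mult_diff_rdistrib matrix_vector_mult_scalar
        mat_matrix_vector_mult)
  finally show ?case
    by (simp add: vec_eq_iff algebra_simps)
qed

lemma column_eigenvector:
  assumes "A ** S = S ** diag_alg phi a"
  shows "A *v column l S = phi (a l) *s column l S"
proof -
  have "(A *v column l S) $ i = (A ** S) $ i $ l" for i
    by (simp add: column_def matrix_vector_mult_def matrix_matrix_mult_def)
  moreover have "(S ** diag_alg phi a) $ i $ l = phi (a l) * column l S $ i" for i
    by (simp add: column_def matrix_matrix_mult_def diag_alg_def if_distrib if_distribR
        mult.commute cong del: if_weak_cong)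
  ultimately show ?thesis
    using assms by (simp add: vec_eq_iff)
qed

lemma lagrange_projectors:
  fixes phi :: "'f::field \<Rightarrow> 'a::comm_ring_1"
    and A :: "'a^'m::finite^'m" and x :: "'n::finite \<Rightarrow> 'a^'m"
  assumes phi: "algebra_map phi" and "inj a"
    and eigen: "\<And>l. A *v x l = phi (a l) *s x l"
  obtains P where "\<And>j l. P j *v x l = (if l = j then x l else 0)"
proof -
  define ks where "ks j = (SOME ks. set ks = - {j})" for j :: 'n
  have ks: "set (ks j) = - {j}" for j
    unfolding ks_def by (rule someI_ex) (simp add: finite_list)
  define c where "c j = (\<Prod>k\<leftarrow>ks j. a j - a k)" for j
  have "c j \<noteq> 0" for j
    using \<open>inj a\<close> ks[of j] by (auto simp: c_def prod_list_zero_iff dest: injD)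
  have lagrange: "(\<Prod>k\<leftarrow>ks j. a l - a k) = (if l = j then c j else 0)" for j l
    using ks[of j] by (force simp: c_def prod_list_zero_iff)
  define P where "P j = mat (phi (inverse (c j))) ** shifted_prod A (map (phi \<circ> a) (ks j))" for j
  have "P j *v x l = phi (inverse (c j)) *s (phi (\<Prod>k\<leftarrow>ks j. a l - a k) *s x l)" for j l
    using shifted_prod_eigenvector[OF eigen]
    by (simp add: P_def mat_matrix_vector_mult flip: matrix_vector_mul_assoc
        add: algebra_map_prod_list[OF phi] algebra_map_diff[OF phi] o_def)
  then have "P j *v x l = (if l = j then x l else 0)" for j l
    using algebra_map_inverse[OF phi \<open>c j \<noteq> 0\<close>]
    by (simp add: lagrange algebra_map_0[OF phi] vector_smult_assoc)
  then show thesis ..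
qed

lemma det_dvd_one_if_column_projectors:
  fixes S :: "'a::comm_ring_1^'n::finite^'n"
  assumes proj: "\<And>j l. P j *v column l S = (if l = j then column l S else 0)"
    and unit: "\<And>j. \<exists>i. S $ i $ j dvd 1"
  shows "det S dvd 1"
proof -
  obtain r where "\<And>j. S $ r j $ j dvd 1"
    using unit by metis
  then have "\<forall>j. \<exists>u. S $ r j $ j * u = 1"
    by (metis dvd_def)
  then obtain u where ru: "\<And>j. S $ r j $ j * u j = 1"
    by (rule choice[THEN exE]) blast
  define B where "B = (\<chi> j k. u j * P j $ r j $ k)"
  have "(B ** S) $ j $ l = mat 1 $ j $ l" for j l
  proof -
    have "(B ** S) $ j $ l = u j * (P j *v column l S) $ r j"
      by (simp add: B_def matrix_matrix_mult_def matrix_vector_mult_def column_def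
          sum_distrib_left mult_ac)
    also have "\<dots> = mat 1 $ j $ l"
      using ru[of j] by (simp add: proj mat_def) (auto simp: column_def mult.commute)
    finally show ?thesis .
  qed
  then have "B ** S = mat 1"
    by (simp add: vec_eq_iff)
  then have "det B * det S = 1"
    by (metis det_mul det_I)
  then show ?thesis
    by (metis dvdI mult.commute)
qed

theorem mainTheorem8:
  fixes phi :: "'f::field \<Rightarrow> 'a::comm_ring_1"
    and Theta Sigma :: "'a^'n::finite^'n"
    and a :: "'n \<Rightarrow> 'f"
  assumes "algebra_map phi"
    and "inj a"
    and "Theta ** Sigma = Sigma ** diag_alg phi a"
    and "\<forall>j. \<exists>i. Sigma $ i $ j dvd 1"
  shows "det Sigma dvd 1"
proof -
  obtain P where "\<And>j l. P j *v column l Sigma = (if l = j then column l Sigma else 0)"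
    using lagrange_projectors[OF assms(1,2) column_eigenvector[OF assms(3)]] by blast
  then show ?thesis
    using det_dvd_one_if_column_projectors assms(4) by blast
qed

end
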